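(* Let $H=K_2\vee\overline{K_2}$ (i.e. $K_4$ minus an edge), and let $v$ be a vertex of degree $2$ in $H$. Then the line graph $L(H)$ has no $f_{3,v}$-kernel-perfect orientation. Equivalently, $H$ is not $f_{3,v}$-edge-orientable.
   Context: $G_1\vee G_2$ denotes the join: the disjoint union of $G_1$ and $G_2$ plus all edges between them. $\overline{K_2}$ is the edgeless graph on $2$ vertices. An orientation of a graph is any digraph obtained by replacing each edge $uv$ with the arc $(u,v)$, with the arc $(v,u)$, or with both arcs. A kernel of a digraph $D$ is an independent set $S$ such that every vertex of $D-S$ has an out-neighbor in $S$. $D$ is kernel-perfect if every induced subdigraph of $D$ has a kernel. For $f:V\to\mathbb{N}$, an orientation $D$ is $f$-kernel-perfect if it is kernel-perfect and $f(x)\ge 1+d^+_D(x)$ for every vertex $x$. For $v\in V(H)$, $f_{3,v}:E(H)\to\mathbb{N}$ is defined by $f_{3,v}(e)=d_H(v)$ if $e$ is incident to $v$, and $f_{3,v}(e)=3$ otherwise. *)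

theory Defs
  imports Main
begin

text \<open>A finite simple graph is a pair (V, E) of a vertex set and a set of
  2-element edges {u,w} with u, w in V, u \<noteq> w.\<close>

type_synonym 'a graph = "'a set \<times> 'a set set"

definition verts :: "'a graph \<Rightarrow> 'a set" where "verts G = fst G"
definition edges :: "'a graph \<Rightarrow> 'a set set" where "edges G = snd G"

definition complete_graph :: "'a set \<Rightarrow> 'a graph" where
  "complete_graph V = (V, {{u, w} | u w. u \<in> V \<and> w \<in> V \<and> u \<noteq> w})"

definition edgeless_graph :: "'a set \<Rightarrow> 'a graph" where
  "edgeless_graph V = (V, {})"

definition graph_join :: "'a graph \<Rightarrow> 'b graph \<Rightarrow> ('a + 'b) graph" where
  "graph_join G1 G2 =
     (Inl ` verts G1 \<union> Inr ` verts G2,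
      (\<lambda>e. Inl ` e) ` edges G1 \<union> (\<lambda>e. Inr ` e) ` edges G2 \<union>
      {{Inl u, Inr w} | u w. u \<in> verts G1 \<and> w \<in> verts G2})"

definition degree :: "'a graph \<Rightarrow> 'a \<Rightarrow> nat" where
  "degree G v = card {e \<in> edges G. v \<in> e}"

definition line_graph :: "'a graph \<Rightarrow> 'a set graph" where
  "line_graph G = (edges G,
     {{e, e'} | e e'. e \<in> edges G \<and> e' \<in> edges G \<and> e \<noteq> e' \<and> e \<inter> e' \<noteq> {}})"

definition is_orientation :: "'a graph \<Rightarrow> ('a \<times> 'a) set \<Rightarrow> bool" where
  "is_orientation G A \<longleftrightarrow>
     (\<forall>(u, w) \<in> A. {u, w} \<in> edges G \<and> u \<noteq> w) \<and>
     (\<forall>u w. {u, w} \<in> edges G \<and> u \<noteq> w \<longrightarrow> (u, w) \<in> A \<or> (w, u) \<in> A)"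

definition is_kernel :: "'a set \<Rightarrow> ('a \<times> 'a) set \<Rightarrow> 'a set \<Rightarrow> bool" where
  "is_kernel W A S \<longleftrightarrow> S \<subseteq> W \<and> (\<forall>x \<in> S. \<forall>y \<in> S. (x, y) \<notin> A) \<and>
     (\<forall>x \<in> W - S. \<exists>y \<in> S. (x, y) \<in> A)"

definition kernel_perfect :: "'a set \<Rightarrow> ('a \<times> 'a) set \<Rightarrow> bool" where
  "kernel_perfect V A \<longleftrightarrow> (\<forall>W \<subseteq> V. \<exists>S. is_kernel W (A \<inter> (W \<times> W)) S)"

definition out_degree :: "('a \<times> 'a) set \<Rightarrow> 'a \<Rightarrow> nat" where
  "out_degree A x = card {y. (x, y) \<in> A}"

definition f_kernel_perfect_orientation ::
  "'a graph \<Rightarrow> ('a \<Rightarrow> nat) \<Rightarrow> ('a \<times> 'a) set \<Rightarrow> bool" where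
  "f_kernel_perfect_orientation G f A \<longleftrightarrow>
     is_orientation G A \<and> kernel_perfect (verts G) A \<and>
     (\<forall>x \<in> verts G. f x \<ge> 1 + out_degree A x)"

definition f3 :: "'a graph \<Rightarrow> 'a \<Rightarrow> 'a set \<Rightarrow> nat" where
  "f3 H v e = (if v \<in> e then degree H v else 3)"

definition H_graph :: "(nat + nat) graph" where
  "H_graph = graph_join (complete_graph {0, 1}) (edgeless_graph {0, 1})"

end

theory Submission
  imports Defs
begin

(* L(H) is the wheel W_4: its hub is the edge a of K_2 and its rim is the 4-cycle x y z w, where
   x and w are the two edges at v.  The out-degree budgets f - 1 add up to 1+1+2+2+2 = 8, which is
   the number of edges of L(H); so an f-orientation orients every edge one way only and exhausts
   every budget.  Kernel-perfectness forbids cyclic triangles.  Up to symmetry x -> w; then x has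
   no other out-neighbour, so a -> x, the triangle a x w forces a -> w, so z -> a, the triangle
   a w z forces z -> w, and w is left without an out-neighbour. *)

definition simple_graph :: "'a graph \<Rightarrow> bool" where
  "simple_graph G \<longleftrightarrow> finite (verts G) \<and>
     (\<forall>e \<in> edges G. \<exists>u \<in> verts G. \<exists>w \<in> verts G. u \<noteq> w \<and> e = {u, w})"

lemma simple_graph_line_graph:
  assumes "finite (edges G)"
  shows "simple_graph (line_graph G)"
  using assms unfolding simple_graph_def line_graph_def verts_def edges_def by auto

lemma finite_edges_simple_graph:
  assumes "simple_graph G"
  shows "finite (edges G)"
proof (rule finite_subset)
  show "edges G \<subseteq> Pow (verts G)"
  proof
    fix e assume "e \<in> edges G"
    then obtain u w where "u \<in> verts G" "w \<in> verts G" "e = {u, w}"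
      using assms unfolding simple_graph_def by blast
    then show "e \<in> Pow (verts G)" by simp
  qed
  show "finite (Pow (verts G))" using assms unfolding simple_graph_def by simp
qed

lemma verts_line_graph [simp]: "verts (line_graph G) = edges G"
  unfolding line_graph_def verts_def by simp

lemma edges_line_graph_iff:
  "{p, q} \<in> edges (line_graph G) \<longleftrightarrow>
     p \<in> edges G \<and> q \<in> edges G \<and> p \<noteq> q \<and> p \<inter> q \<noteq> {}"
proof
  assume "{p, q} \<in> edges (line_graph G)"
  then obtain e e' where "{p, q} = {e, e'}" "e \<in> edges G" "e' \<in> edges G" "e \<noteq> e'" "e \<inter> e' \<noteq> {}"
    unfolding line_graph_def edges_def[of "(_, _)"] by auto
  moreover from \<open>{p, q} = {e, e'}\<close> have "p = e \<and> q = e' \<or> p = e' \<and> q = e"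
    by (simp add: doubleton_eq_iff)
  ultimately show "p \<in> edges G \<and> q \<in> edges G \<and> p \<noteq> q \<and> p \<inter> q \<noteq> {}"
    by (auto simp: inf_commute)
next
  assume "p \<in> edges G \<and> q \<in> edges G \<and> p \<noteq> q \<and> p \<inter> q \<noteq> {}"
  then show "{p, q} \<in> edges (line_graph G)"
    unfolding line_graph_def edges_def[of "(_, _)"] by auto
qed

lemma line_graph_arc_adjacent:
  assumes "is_orientation (line_graph G) A" "(p, q) \<in> A"
  shows "q \<in> edges G" "p \<inter> q \<noteq> {}"
proof -
  have "{p, q} \<in> edges (line_graph G)" using assms unfolding is_orientation_def by auto
  then show "q \<in> edges G" "p \<inter> q \<noteq> {}" by (simp_all add: edges_line_graph_iff)
qed

lemma line_graph_adjacent_arc: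
  assumes "is_orientation (line_graph G) A"
    and "p \<in> edges G" "q \<in> edges G" "p \<noteq> q" "p \<inter> q \<noteq> {}"
  shows "(p, q) \<in> A \<or> (q, p) \<in> A"
proof -
  have "{p, q} \<in> edges (line_graph G)" using assms(2-) by (simp add: edges_line_graph_iff)
  then show ?thesis using assms(1,4) unfolding is_orientation_def by blast
qed

lemma orientation_subset_verts:
  assumes "simple_graph G" "is_orientation G A"
  shows "A \<subseteq> verts G \<times> verts G"
proof
  fix p assume "p \<in> A"
  then obtain u w where p: "p = (u, w)" and "{u, w} \<in> edges G"
    using assms(2) unfolding is_orientation_def by fastforce
  then obtain u' w' where "u' \<in> verts G" "w' \<in> verts G" "{u, w} = {u', w'}"
    using assms(1) unfolding simple_graph_def by blast
  then show "p \<in> verts G \<times> verts G" using p by (auto simp: doubleton_eq_iff)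
qed

lemma edges_eq_image_orientation:
  assumes "simple_graph G" "is_orientation G A"
  shows "edges G = (\<lambda>(u, w). {u, w}) ` A"
proof
  show "edges G \<subseteq> (\<lambda>(u, w). {u, w}) ` A"
  proof
    fix e assume "e \<in> edges G"
    then obtain u w where "u \<noteq> w" "e = {u, w}"
      using assms(1) unfolding simple_graph_def by blast
    with \<open>e \<in> edges G\<close> have "(u, w) \<in> A \<or> (w, u) \<in> A"
      using assms(2) unfolding is_orientation_def by blast
    then show "e \<in> (\<lambda>(u, w). {u, w}) ` A"
      using \<open>e = {u, w}\<close> by (auto simp: insert_commute)
  qed
  show "(\<lambda>(u, w). {u, w}) ` A \<subseteq> edges G"
    using assms(2) unfolding is_orientation_def by auto
qed

lemma card_eq_sum_out_degree:
  assumes "finite V" "A \<subseteq> V \<times> V"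
  shows "card A = (\<Sum>x\<in>V. out_degree A x)"
proof -
  have "A = (SIGMA x:V. {y. (x, y) \<in> A})" using assms(2) by auto
  then have "card A = card (SIGMA x:V. {y. (x, y) \<in> A})" by (rule arg_cong)
  also have "\<dots> = (\<Sum>x\<in>V. card {y. (x, y) \<in> A})"
    using assms by (intro card_SigmaI) (auto intro: finite_subset[of _ V])
  finally show ?thesis unfolding out_degree_def .
qed

lemma tight_orientation:
  assumes G: "simple_graph G" and A: "is_orientation G A"
    and bound: "\<forall>x \<in> verts G. 1 + out_degree A x \<le> f x"
    and budget: "(\<Sum>x\<in>verts G. f x - 1) \<le> card (edges G)"
  shows tight_orientation_out_degree: "\<forall>x \<in> verts G. out_degree A x = f x - 1"
    and tight_orientation_asym: "(u, w) \<in> A \<Longrightarrow> (w, u) \<notin> A"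
proof -
  have fin_V: "finite (verts G)" using G unfolding simple_graph_def by blast
  have sub: "A \<subseteq> verts G \<times> verts G" using orientation_subset_verts[OF G A] .
  then have fin_A: "finite A" using fin_V by (meson finite_SigmaI finite_subset)
  let ?edge = "\<lambda>(u, w). {u, w}"
  have le: "\<forall>x \<in> verts G. out_degree A x \<le> f x - 1" using bound by auto
  have card_le: "card (?edge ` A) \<le> card A" using fin_A by (rule card_image_le)
  have sum_le: "(\<Sum>x\<in>verts G. out_degree A x) \<le> (\<Sum>x\<in>verts G. f x - 1)"
    using le by (intro sum_mono) auto
  note edges = edges_eq_image_orientation[OF G A] and arcs = card_eq_sum_out_degree[OF fin_V sub]
  have eq_sum: "(\<Sum>x\<in>verts G. out_degree A x) = (\<Sum>x\<in>verts G. f x - 1)"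
    and eq_card: "card (?edge ` A) = card A"
    using card_le sum_le budget unfolding edges arcs by linarith+
  show "\<forall>x \<in> verts G. out_degree A x = f x - 1"
    using sum_mono_inv[OF eq_sum] le fin_V by blast
  assume uw: "(u, w) \<in> A"
  show "(w, u) \<notin> A"
  proof
    assume wu: "(w, u) \<in> A"
    have "inj_on ?edge A" using eq_card_imp_inj_on[OF fin_A eq_card] .
    moreover have "?edge (u, w) = ?edge (w, u)" by (simp add: insert_commute)
    ultimately have "u = w" using inj_onD uw wu by fastforce
    then show False using uw A unfolding is_orientation_def by blast
  qed
qed

lemma cyclic_triangle_no_kernel:
  assumes "(p, q) \<in> A" "(q, r) \<in> A" "(r, p) \<in> A" "(q, p) \<notin> A" "(r, q) \<notin> A" "(p, r) \<notin> A"
  shows "\<not> is_kernel {p, q, r} (A \<inter> ({p, q, r} \<times> {p, q, r})) S"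
  using assms unfolding is_kernel_def by (cases "p \<in> S"; cases "q \<in> S"; cases "r \<in> S"; auto)

lemma kernel_perfect_no_cyclic_triangle:
  assumes "kernel_perfect V A" "{p, q, r} \<subseteq> V"
    and "(p, q) \<in> A" "(q, r) \<in> A" "(r, p) \<in> A" "(q, p) \<notin> A" "(r, q) \<notin> A" "(p, r) \<notin> A"
  shows False
proof -
  obtain S where "is_kernel {p, q, r} (A \<inter> ({p, q, r} \<times> {p, q, r})) S"
    using assms(1,2) unfolding kernel_perfect_def by blast
  then show False using cyclic_triangle_no_kernel[OF assms(3-8)] by blast
qed

lemma H_graph_verts: "verts H_graph = {Inl 0, Inl 1, Inr 0, Inr 1}"
  unfolding H_graph_def graph_join_def complete_graph_def edgeless_graph_def verts_def by auto

lemma H_graph_edges_explicit: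
  "edges H_graph = {{Inl 0, Inl 1}, {Inl 0, Inr 0}, {Inl 0, Inr 1}, {Inl 1, Inr 0}, {Inl 1, Inr 1}}"
proof -
  have K2: "{{u, w} |u w. u \<in> {0::nat, 1} \<and> w \<in> {0, 1} \<and> u \<noteq> w} = {{0, 1}}"
    by auto
  have join: "{{Inl u, Inr w} |u w. u \<in> {0::nat, 1} \<and> w \<in> {0::nat, 1}} =
      {{Inl 0, Inr 0}, {Inl 0, Inr 1}, {Inl 1, Inr 0}, {Inl 1, Inr 1}}"
    by auto
  show ?thesis
    unfolding H_graph_def graph_join_def complete_graph_def edgeless_graph_def edges_def verts_def
    by (simp only: fst_conv snd_conv K2 join) auto
qed

lemma H_graph_edges:
  fixes i i' j k :: nat
  assumes "{i, i'} = {0, 1}" "{j, k} = {0, 1}"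
  shows "edges H_graph =
    {{Inl i, Inl i'}, {Inl i, Inr j}, {Inl i, Inr k}, {Inl i', Inr k}, {Inl i', Inr j}}"
proof -
  have "i = 0 \<and> i' = 1 \<or> i = 1 \<and> i' = 0" "j = 0 \<and> k = 1 \<or> j = 1 \<and> k = 0"
    using assms by (auto simp: doubleton_eq_iff)
  then show ?thesis
    unfolding H_graph_edges_explicit by (elim disjE conjE) (simp_all add: insert_commute)
qed

lemma degree_H_graph_Inl:
  assumes "i \<in> {0, 1}"
  shows "degree H_graph (Inl i) = 3"
proof -
  have "{e \<in> edges H_graph. Inl i \<in> e} = {{Inl 0, Inl 1}, {Inl i, Inr 0}, {Inl i, Inr 1}}"
    using assms unfolding H_graph_edges_explicit by auto
  then show ?thesis unfolding degree_def by (simp add: doubleton_eq_iff)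
qed

lemma degree_H_graph_Inr:
  assumes "j \<in> {0, 1}"
  shows "degree H_graph (Inr j) = 2"
proof -
  have "{e \<in> edges H_graph. Inr j \<in> e} = {{Inl 0, Inr j}, {Inl 1, Inr j}}"
    using assms unfolding H_graph_edges_explicit by auto
  then show ?thesis unfolding degree_def by (simp add: doubleton_eq_iff)
qed

locale H_graph_labelling =
  fixes i i' j k :: nat
  assumes K2_verts: "{i, i'} = {0, 1}" and co_K2_verts: "{j, k} = {0, 1}"
begin

definition a :: "(nat + nat) set" where "a = {Inl i, Inl i'}"
definition x :: "(nat + nat) set" where "x = {Inl i, Inr j}"
definition y :: "(nat + nat) set" where "y = {Inl i, Inr k}"
definition z :: "(nat + nat) set" where "z = {Inl i', Inr k}"
definition w :: "(nat + nat) set" where "w = {Inl i', Inr j}"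

lemmas labels_def = a_def x_def y_def z_def w_def

lemma edges_H_graph: "edges H_graph = {a, x, y, z, w}"
  unfolding labels_def using H_graph_edges[OF K2_verts co_K2_verts] .

lemma labels_neq: "i \<noteq> i'" "j \<noteq> k"
  using K2_verts co_K2_verts by (auto simp: doubleton_eq_iff)

lemma distinct_labels: "distinct [a, x, y, z, w]"
  using labels_neq unfolding labels_def by (auto simp: doubleton_eq_iff)

lemma labels_meet:
  "a \<inter> x \<noteq> {}" "a \<inter> y \<noteq> {}" "a \<inter> z \<noteq> {}" "a \<inter> w \<noteq> {}"
  "x \<inter> y \<noteq> {}" "y \<inter> z \<noteq> {}" "z \<inter> w \<noteq> {}" "x \<inter> w \<noteq> {}"
  unfolding labels_def by auto

lemma disjoint_w_y: "w \<inter> y = {}"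
  using labels_neq unfolding labels_def by auto

lemma f3_labels:
  "f3 H_graph (Inr j) x = 2" "f3 H_graph (Inr j) w = 2"
  "f3 H_graph (Inr j) a = 3" "f3 H_graph (Inr j) y = 3" "f3 H_graph (Inr j) z = 3"
  using co_K2_verts labels_neq degree_H_graph_Inr[of j] unfolding f3_def labels_def by auto

lemma f3_budget_le_card_edges_line_graph:
  "(\<Sum>e\<in>verts (line_graph H_graph). f3 H_graph (Inr j) e - 1) \<le> card (edges (line_graph H_graph))"
proof -
  have "(\<Sum>e\<in>verts (line_graph H_graph). f3 H_graph (Inr j) e - 1) = 8"
    using distinct_labels f3_labels by (simp add: edges_H_graph)
  also have "8 = card {{a, x}, {a, y}, {a, z}, {a, w}, {x, y}, {y, z}, {z, w}, {x, w}}"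
    using distinct_labels by (simp add: doubleton_eq_iff eq_commute[of z x])
  also have "\<dots> \<le> card (edges (line_graph H_graph))"
  proof (rule card_mono)
    show "finite (edges (line_graph H_graph))"
      by (rule finite_edges_simple_graph, rule simple_graph_line_graph) (simp add: edges_H_graph)
    show "{{a, x}, {a, y}, {a, z}, {a, w}, {x, y}, {y, z}, {z, w}, {x, w}} \<subseteq> edges (line_graph H_graph)"
      using distinct_labels labels_meet by (simp add: edges_line_graph_iff edges_H_graph)
  qed
  finally show ?thesis .
qed

lemma f3_kernel_perfect_orientation_tight:
  assumes "f_kernel_perfect_orientation (line_graph H_graph) (f3 H_graph (Inr j)) A"
  shows "out_degree A x = 1" "out_degree A w = 1" "out_degree A a = 2"
    and "(p, q) \<in> A \<Longrightarrow> (q, p) \<notin> A"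
proof -
  have orient: "is_orientation (line_graph H_graph) A"
    and bound: "\<forall>e \<in> verts (line_graph H_graph). 1 + out_degree A e \<le> f3 H_graph (Inr j) e"
    using assms unfolding f_kernel_perfect_orientation_def by simp_all
  have "simple_graph (line_graph H_graph)"
    by (rule simple_graph_line_graph) (simp add: edges_H_graph)
  note tight = tight_orientation[OF this orient bound f3_budget_le_card_edges_line_graph]
  show "out_degree A x = 1" "out_degree A w = 1" "out_degree A a = 2"
    using tight(1) f3_labels by (simp_all add: edges_H_graph)
  show "(p, q) \<in> A \<Longrightarrow> (q, p) \<notin> A" using tight(2) .
qed

lemma no_f3_kernel_perfect_orientation_with_arc:
  assumes A: "f_kernel_perfect_orientation (line_graph H_graph) (f3 H_graph (Inr j)) A"
    and "(x, w) \<in> A"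
  shows False
proof -
  have orient: "is_orientation (line_graph H_graph) A" and kp: "kernel_perfect (edges H_graph) A"
    using A unfolding f_kernel_perfect_orientation_def by simp_all
  note out_deg = f3_kernel_perfect_orientation_tight(1-3)[OF A]
    and asym = f3_kernel_perfect_orientation_tight(4)[OF A]
  have arc: "(p, q) \<in> A \<or> (q, p) \<in> A"
    if "p \<in> {a, x, y, z, w}" "q \<in> {a, x, y, z, w}" "p \<noteq> q" "p \<inter> q \<noteq> {}" for p q
    using line_graph_adjacent_arc[OF orient that[folded edges_H_graph]] .
  have no_cyclic_triangle: False
    if "{p, q, r} \<subseteq> {a, x, y, z, w}" "(p, q) \<in> A" "(q, r) \<in> A" "(r, p) \<in> A" for p q r
    using kernel_perfect_no_cyclic_triangle[OF kp that[folded edges_H_graph]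
        asym[OF that(2)] asym[OF that(3)] asym[OF that(4)]] .
  obtain t where "{q. (x, q) \<in> A} = {t}"
    using out_deg(1) unfolding out_degree_def by (rule card_1_singletonE)
  with \<open>(x, w) \<in> A\<close> have out_x: "(x, q) \<in> A \<longleftrightarrow> q = w" for q by blast
  have "(a, x) \<in> A" using arc[of a x] distinct_labels labels_meet by (simp add: out_x)
  have "(w, a) \<notin> A" using no_cyclic_triangle[of a x w] \<open>(a, x) \<in> A\<close> \<open>(x, w) \<in> A\<close> by auto
  then have "(a, w) \<in> A" using arc[of a w] distinct_labels labels_meet by simp
  have "{q. (a, q) \<in> A} = {x, w}"
  proof (rule card_subset_eq[symmetric])
    show "finite {q. (a, q) \<in> A}"
      using out_deg(3) unfolding out_degree_def by (simp add: card_ge_0_finite)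
    show "{x, w} \<subseteq> {q. (a, q) \<in> A}" using \<open>(a, x) \<in> A\<close> \<open>(a, w) \<in> A\<close> by auto
    show "card {x, w} = card {q. (a, q) \<in> A}"
      using out_deg(3) distinct_labels unfolding out_degree_def by auto
  qed
  then have out_a: "(a, q) \<in> A \<longleftrightarrow> q = x \<or> q = w" for q by blast
  have "(a, z) \<notin> A"
  proof
    assume "(a, z) \<in> A"
    then have "z = x \<or> z = w" using out_a by blast
    then show False using distinct_labels by auto
  qed
  then have "(z, a) \<in> A" using arc[of a z] distinct_labels labels_meet by simp
  have "(w, z) \<notin> A" using no_cyclic_triangle[of a w z] \<open>(a, w) \<in> A\<close> \<open>(z, a) \<in> A\<close> by auto
  have "(w, q) \<notin> A" for q
  proof
    assume "(w, q) \<in> A"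
    then have "q \<in> {a, x, y, z, w}" "w \<inter> q \<noteq> {}" "q \<noteq> w"
      using line_graph_arc_adjacent[OF orient \<open>(w, q) \<in> A\<close>] asym[OF \<open>(w, q) \<in> A\<close>]
      unfolding edges_H_graph by auto
    then show False
      using disjoint_w_y \<open>(w, q) \<in> A\<close> \<open>(w, a) \<notin> A\<close> \<open>(w, z) \<notin> A\<close> asym[OF \<open>(x, w) \<in> A\<close>] by auto
  qed
  then show False using out_deg(2) unfolding out_degree_def by simp
qed

end

theorem mainTheorem19:
  assumes "v \<in> verts H_graph" and "degree H_graph v = 2"
  shows "\<not> (\<exists>A. f_kernel_perfect_orientation (line_graph H_graph) (f3 H_graph v) A)"
proof
  assume "\<exists>A. f_kernel_perfect_orientation (line_graph H_graph) (f3 H_graph v) A"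
  then obtain A where A_v: "f_kernel_perfect_orientation (line_graph H_graph) (f3 H_graph v) A" ..
  have "v = Inr 0 \<or> v = Inr 1"
    using assms degree_H_graph_Inl[of 0] degree_H_graph_Inl[of 1] unfolding H_graph_verts by auto
  then obtain j where "v = Inr j" "j \<in> {0, 1}" by blast
  then have A: "f_kernel_perfect_orientation (line_graph H_graph) (f3 H_graph (Inr j)) A"
    and j: "{j, 1 - j} = {0, 1}" using A_v by auto
  \<comment> \<open>L10 exchanges the two vertices of K_2, hence reverses the arc between x and w.\<close>
  interpret L01: H_graph_labelling 0 1 j "1 - j" using j by unfold_locales simp
  interpret L10: H_graph_labelling 1 0 j "1 - j" using j by unfold_locales (simp add: insert_commute)
  have "is_orientation (line_graph H_graph) A"
    using A unfolding f_kernel_perfect_orientation_def by blast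
  then have "(L01.x, L01.w) \<in> A \<or> (L01.w, L01.x) \<in> A"
    by (rule line_graph_adjacent_arc)
      (use L01.distinct_labels L01.labels_meet(8) in \<open>simp_all add: L01.edges_H_graph\<close>)
  moreover have "L01.w = L10.x" "L01.x = L10.w"
    unfolding L01.labels_def L10.labels_def by simp_all
  ultimately show False
    using L01.no_f3_kernel_perfect_orientation_with_arc[OF A]
      L10.no_f3_kernel_perfect_orientation_with_arc[OF A] by metis
qed

end
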